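(* Let $\Sigma$ be a flag complex on the vertex set $[n]$ and let $\ell$ be a positive integer. Let $\Delta$ and $\Delta'$ be the simplicial complexes (collections of subsets of $[n]$ closed under taking subsets) whose Stanley–Reisner ideals are $I_\Delta=I(\overline{\mathrm{skel}_\Sigma(\ell)})$ and $I_{\Delta'}=I(\overline{\mathrm{skel}_\Sigma(1)})$. Then $\Delta^\vee=\mathrm{skel}_{(\Delta')^\vee}(n-\ell-2)$.
   Context: $S=K[x_1,\ldots,x_n]$, $x_F=\prod_{i\in F}x_i$. For a simplicial complex $\Gamma$, the Stanley–Reisner ideal $I_\Gamma$ is generated by all $x_F$ with $F\notin\Gamma$, and the facet ideal $I(\Gamma)$ is generated by the $x_F$ with $F$ a facet (maximal face) of $\Gamma$. $\Sigma$ is flag if all its minimal nonfaces have exactly two elements (the full simplex is also considered flag). $\mathrm{skel}_\Gamma(i)$ is the complex whose facets are the $i$-dimensional faces of $\Gamma$ (dimension of $F$ is $|F|-1$). For $k\ge1$, $\overline{\mathrm{skel}_\Sigma(k)}$ is the complex whose facets are the $(k+1)$-element subsets of $[n]$ not belonging to $\Sigma$; thus $I(\overline{\mathrm{skel}_\Sigma(k)})$ is generated by $x_F$ for $F\subseteq[n]$, $|F|=k+1$, $F\notin\Sigma$. The Alexander dual is $\Gamma^\vee=\{[n]\setminus F: F\subseteq[n],\ F\notin\Gamma\}$. *)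

theory Defs
  imports Main
begin

definition simplicial_complex :: "nat \<Rightarrow> nat set set \<Rightarrow> bool" where
  "simplicial_complex n \<Gamma> \<longleftrightarrow>
     (\<forall>F\<in>\<Gamma>. F \<subseteq> {1..n}) \<and> (\<forall>F\<in>\<Gamma>. \<forall>G. G \<subseteq> F \<longrightarrow> G \<in> \<Gamma>)"

definition min_nonface :: "nat \<Rightarrow> nat set set \<Rightarrow> nat set \<Rightarrow> bool" where
  "min_nonface n \<Gamma> F \<longleftrightarrow> F \<subseteq> {1..n} \<and> F \<notin> \<Gamma> \<and> (\<forall>G. G \<subset> F \<longrightarrow> G \<in> \<Gamma>)"

definition flag :: "nat \<Rightarrow> nat set set \<Rightarrow> bool" where
  "flag n \<Sigma> \<longleftrightarrow> (\<forall>F. min_nonface n \<Sigma> F \<longrightarrow> card F = 2)"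

definition facets :: "nat set set \<Rightarrow> nat set set" where
  "facets \<Gamma> = {F \<in> \<Gamma>. \<forall>G\<in>\<Gamma>. F \<subseteq> G \<longrightarrow> G = F}"

definition gen_complex :: "nat set set \<Rightarrow> nat set set" where
  "gen_complex \<F> = {G. \<exists>F\<in>\<F>. G \<subseteq> F}"

definition skel :: "nat set set \<Rightarrow> int \<Rightarrow> nat set set" where
  "skel \<Gamma> i = gen_complex {F \<in> \<Gamma>. int (card F) = i + 1}"

text \<open>overline skel_Sigma(k): facets are the (k+1)-subsets of [n] not in Sigma.\<close>
definition coskel :: "nat \<Rightarrow> nat set set \<Rightarrow> nat \<Rightarrow> nat set set" where
  "coskel n \<Sigma> k = gen_complex {F. F \<subseteq> {1..n} \<and> card F = k + 1 \<and> F \<notin> \<Sigma>}"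

definition alexander_dual :: "nat \<Rightarrow> nat set set \<Rightarrow> nat set set" where
  "alexander_dual n \<Gamma> = {{1..n} - F | F. F \<subseteq> {1..n} \<and> F \<notin> \<Gamma>}"

text \<open>A monomial is an exponent vector supported in [n]. A monomial ideal is determined by
  the set of monomials it contains, so ideals are compared via these sets.\<close>

definition monomial :: "nat \<Rightarrow> (nat \<Rightarrow> nat) \<Rightarrow> bool" where
  "monomial n m \<longleftrightarrow> (\<forall>i. m i \<noteq> 0 \<longrightarrow> i \<in> {1..n})"

definition xF :: "nat set \<Rightarrow> (nat \<Rightarrow> nat)" where
  "xF F = (\<lambda>i. if i \<in> F then 1 else 0)"

definition mdvd :: "(nat \<Rightarrow> nat) \<Rightarrow> (nat \<Rightarrow> nat) \<Rightarrow> bool" where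
  "mdvd a b \<longleftrightarrow> (\<forall>i. a i \<le> b i)"

definition monomial_ideal :: "nat \<Rightarrow> (nat \<Rightarrow> nat) set \<Rightarrow> (nat \<Rightarrow> nat) set" where
  "monomial_ideal n gens = {m. monomial n m \<and> (\<exists>g\<in>gens. mdvd g m)}"

definition SR_ideal :: "nat \<Rightarrow> nat set set \<Rightarrow> (nat \<Rightarrow> nat) set" where
  "SR_ideal n \<Gamma> = monomial_ideal n {xF F | F. F \<subseteq> {1..n} \<and> F \<notin> \<Gamma>}"

definition facet_ideal :: "nat \<Rightarrow> nat set set \<Rightarrow> (nat \<Rightarrow> nat) set" where
  "facet_ideal n \<Gamma> = monomial_ideal n {xF F | F. F \<in> facets \<Gamma>}"

end

theory Submission
  imports Defs
begin

text \<open>Since \<open>\<Sigma>\<close> is flag, every nonface of \<open>\<Sigma>\<close> contains a non-edge, so the nonfaces of \<open>\<Delta>'\<close>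
  (the supersets of non-edges) are those of \<open>\<Sigma>\<close>, i.e. \<open>\<Delta>' = \<Sigma>\<close>. The nonfaces of \<open>\<Delta>\<close> are the
  supersets of the \<open>(l+1)\<close>-subsets of \<open>[n]\<close> outside \<open>\<Sigma>\<close>; complementing, \<open>\<Delta>\<^sup>\<or>\<close> is generated by
  their complements, which are exactly the \<open>(n-l-1)\<close>-element faces of \<open>\<Sigma>\<^sup>\<or>\<close>.\<close>

definition nonfaces_of_card :: "nat \<Rightarrow> nat set set \<Rightarrow> nat \<Rightarrow> nat set set" where
  "nonfaces_of_card n \<Gamma> k = {F. F \<subseteq> {1..n} \<and> card F = k \<and> F \<notin> \<Gamma>}"

lemma simplicial_complex_eqI:
  assumes "simplicial_complex n \<Delta>" and "simplicial_complex n \<Gamma>"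
    and "\<And>F. F \<subseteq> {1..n} \<Longrightarrow> F \<in> \<Delta> \<longleftrightarrow> F \<in> \<Gamma>"
  shows "\<Delta> = \<Gamma>"
proof (rule set_eqI)
  fix F
  from assms(1,2) have "F \<in> \<Delta> \<or> F \<in> \<Gamma> \<Longrightarrow> F \<subseteq> {1..n}"
    unfolding simplicial_complex_def by auto
  with assms(3)[of F] show "F \<in> \<Delta> \<longleftrightarrow> F \<in> \<Gamma>" by auto
qed

lemma simplicial_complex_nonface_mono:
  assumes "simplicial_complex n \<Gamma>" and "G \<subseteq> F" and "G \<notin> \<Gamma>"
  shows "F \<notin> \<Gamma>"
  using assms unfolding simplicial_complex_def by auto

lemma coskel_eq_gen_complex: "coskel n \<Sigma> k = gen_complex (nonfaces_of_card n \<Sigma> (k + 1))"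
  unfolding coskel_def nonfaces_of_card_def ..

lemma mdvd_xF_iff: "mdvd (xF G) (xF F) \<longleftrightarrow> G \<subseteq> F"
  unfolding mdvd_def xF_def by (auto split: if_splits)

lemma monomial_xF: "F \<subseteq> {1..n} \<Longrightarrow> monomial n (xF F)"
  unfolding monomial_def xF_def by auto

lemma xF_mem_monomial_ideal_iff:
  assumes "F \<subseteq> {1..n}"
  shows "xF F \<in> monomial_ideal n {xF G | G. P G} \<longleftrightarrow> (\<exists>G. P G \<and> G \<subseteq> F)"
  using monomial_xF[OF assms] unfolding monomial_ideal_def by (auto simp: mdvd_xF_iff)

lemma xF_mem_SR_ideal_iff:
  assumes "simplicial_complex n \<Delta>" and "F \<subseteq> {1..n}"
  shows "xF F \<in> SR_ideal n \<Delta> \<longleftrightarrow> F \<notin> \<Delta>"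
  using assms unfolding SR_ideal_def xF_mem_monomial_ideal_iff[OF assms(2)] simplicial_complex_def
  by (meson order_refl order_trans)

lemma facets_gen_complex_equicard:
  assumes "\<forall>G\<in>S. finite G \<and> card G = k"
  shows "facets (gen_complex S) = S"
proof
  show "facets (gen_complex S) \<subseteq> S"
    unfolding facets_def gen_complex_def by auto
  show "S \<subseteq> facets (gen_complex S)"
  proof
    fix G assume "G \<in> S"
    have "H = G" if "H \<in> gen_complex S" "G \<subseteq> H" for H
    proof -
      obtain G' where "G' \<in> S" "H \<subseteq> G'" using \<open>H \<in> gen_complex S\<close> unfolding gen_complex_def by auto
      with \<open>G \<in> S\<close> \<open>G \<subseteq> H\<close> assms have "G = G'" by (metis card_subset_eq order_trans)
      with \<open>G \<subseteq> H\<close> \<open>H \<subseteq> G'\<close> show "H = G" by auto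
    qed
    with \<open>G \<in> S\<close> show "G \<in> facets (gen_complex S)"
      unfolding facets_def gen_complex_def by auto
  qed
qed

lemma nonface_iff_contains_coskel_facet:
  assumes "simplicial_complex n \<Delta>" and "SR_ideal n \<Delta> = facet_ideal n (coskel n \<Sigma> k)"
    and "F \<subseteq> {1..n}"
  shows "F \<notin> \<Delta> \<longleftrightarrow> (\<exists>G\<in>nonfaces_of_card n \<Sigma> (k + 1). G \<subseteq> F)"
proof -
  have "\<forall>G\<in>nonfaces_of_card n \<Sigma> (k + 1). finite G \<and> card G = k + 1"
    unfolding nonfaces_of_card_def using finite_subset by blast
  then have "facets (coskel n \<Sigma> k) = nonfaces_of_card n \<Sigma> (k + 1)"
    unfolding coskel_eq_gen_complex by (rule facets_gen_complex_equicard)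
  then have "xF F \<in> facet_ideal n (coskel n \<Sigma> k) \<longleftrightarrow> (\<exists>G\<in>nonfaces_of_card n \<Sigma> (k + 1). G \<subseteq> F)"
    unfolding facet_ideal_def using xF_mem_monomial_ideal_iff[OF assms(3)] by auto
  with assms(2) xF_mem_SR_ideal_iff[OF assms(1,3)] show ?thesis by simp
qed

lemma flag_nonface_contains_nonedge:
  assumes "flag n \<Sigma>" and "F \<subseteq> {1..n}" and "F \<notin> \<Sigma>"
  shows "\<exists>G \<in> nonfaces_of_card n \<Sigma> 2. G \<subseteq> F"
proof -
  obtain G where G: "G \<subseteq> F" "G \<notin> \<Sigma>"
    and least: "\<And>H. H \<subseteq> F \<Longrightarrow> H \<notin> \<Sigma> \<Longrightarrow> card G \<le> card H"
  proof -
    have "\<exists>G. (G \<subseteq> F \<and> G \<notin> \<Sigma>) \<and> (\<forall>H. H \<subseteq> F \<and> H \<notin> \<Sigma> \<longrightarrow> card G \<le> card H)"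
      using ex_has_least_nat[of "\<lambda>G. G \<subseteq> F \<and> G \<notin> \<Sigma>" F card] assms(3) by simp
    then show ?thesis using that by blast
  qed
  have "finite G" using G(1) assms(2) by (meson finite_atLeastAtMost finite_subset order_trans)
  have "H \<in> \<Sigma>" if "H \<subset> G" for H
    using least[of H] psubset_card_mono[OF \<open>finite G\<close> that] that G(1) by auto
  then have "min_nonface n \<Sigma> G"
    unfolding min_nonface_def using G assms(2) by auto
  then have "card G = 2" using assms(1) unfolding flag_def by auto
  with G assms(2) show ?thesis unfolding nonfaces_of_card_def by auto
qed

lemma flag_eq_complex_of_nonedges:
  assumes "simplicial_complex n \<Sigma>" and "flag n \<Sigma>" and "simplicial_complex n \<Delta>"
    and "SR_ideal n \<Delta> = facet_ideal n (coskel n \<Sigma> 1)"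
  shows "\<Delta> = \<Sigma>"
proof (rule simplicial_complex_eqI[OF assms(3,1)])
  fix F assume F: "F \<subseteq> {1..n}"
  have "F \<notin> \<Delta> \<longleftrightarrow> (\<exists>G\<in>nonfaces_of_card n \<Sigma> 2. G \<subseteq> F)"
    using nonface_iff_contains_coskel_facet[OF assms(3,4) F] by (simp add: numeral_2_eq_2)
  also have "\<dots> \<longleftrightarrow> F \<notin> \<Sigma>"
  proof
    assume "\<exists>G\<in>nonfaces_of_card n \<Sigma> 2. G \<subseteq> F"
    then obtain G where "G \<subseteq> F" "G \<notin> \<Sigma>" unfolding nonfaces_of_card_def by blast
    with assms(1) show "F \<notin> \<Sigma>" by (rule simplicial_complex_nonface_mono)
  qed (rule flag_nonface_contains_nonedge[OF assms(2) F])
  finally show "F \<in> \<Delta> \<longleftrightarrow> F \<in> \<Sigma>" by blast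
qed

lemma alexander_dual_eq_gen_complex:
  assumes "S \<subseteq> Pow {1..n}" and "\<And>F. F \<subseteq> {1..n} \<Longrightarrow> F \<notin> \<Delta> \<longleftrightarrow> (\<exists>G\<in>S. G \<subseteq> F)"
  shows "alexander_dual n \<Delta> = gen_complex ((-) {1..n} ` S)"
proof (rule set_eqI)
  fix X
  have "X \<in> alexander_dual n \<Delta> \<longleftrightarrow> (\<exists>F\<subseteq>{1..n}. X = {1..n} - F \<and> F \<notin> \<Delta>)"
    unfolding alexander_dual_def by blast
  also have "\<dots> \<longleftrightarrow> (\<exists>G\<in>S. X \<subseteq> {1..n} - G)"
  proof
    assume "\<exists>F\<subseteq>{1..n}. X = {1..n} - F \<and> F \<notin> \<Delta>"
    then obtain F where F: "F \<subseteq> {1..n}" "X = {1..n} - F" "F \<notin> \<Delta>" by blast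
    then obtain G where "G \<in> S" "G \<subseteq> F" using assms(2) by blast
    with F show "\<exists>G\<in>S. X \<subseteq> {1..n} - G" by blast
  next
    assume "\<exists>G\<in>S. X \<subseteq> {1..n} - G"
    then obtain G where "G \<in> S" "X \<subseteq> {1..n} - G" ..
    moreover have "G \<subseteq> {1..n}" using \<open>G \<in> S\<close> assms(1) by blast
    ultimately have "{1..n} - X \<notin> \<Delta>" using assms(2)[of "{1..n} - X"] by blast
    with \<open>X \<subseteq> {1..n} - G\<close> show "\<exists>F\<subseteq>{1..n}. X = {1..n} - F \<and> F \<notin> \<Delta>"
      by (intro exI[of _ "{1..n} - X"]) blast
  qed
  also have "\<dots> \<longleftrightarrow> X \<in> gen_complex ((-) {1..n} ` S)"
    unfolding gen_complex_def by blast
  finally show "X \<in> alexander_dual n \<Delta> \<longleftrightarrow> X \<in> gen_complex ((-) {1..n} ` S)" .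
qed

lemma skel_alexander_dual:
  "skel (alexander_dual n \<Gamma>) (int n - int k - 1) = gen_complex ((-) {1..n} ` nonfaces_of_card n \<Gamma> k)"
proof -
  have "int (card ({1..n} - G)) = int n - int k - 1 + 1 \<longleftrightarrow> card G = k" if "G \<subseteq> {1..n}" for G
    using that card_Diff_subset[of G "{1..n}"] card_mono[of "{1..n}" G] finite_subset[OF that] by auto
  then have "{H \<in> alexander_dual n \<Gamma>. int (card H) = int n - int k - 1 + 1}
      = (-) {1..n} ` nonfaces_of_card n \<Gamma> k"
    unfolding alexander_dual_def nonfaces_of_card_def by blast
  then show ?thesis unfolding skel_def by simp
qed

theorem proposition1p3:
  fixes n l :: nat and \<Sigma> \<Delta> \<Delta>' :: "nat set set"
  assumes "simplicial_complex n \<Sigma>" and "flag n \<Sigma>"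
    and "l \<ge> 1"
    and "simplicial_complex n \<Delta>" and "SR_ideal n \<Delta> = facet_ideal n (coskel n \<Sigma> l)"
    and "simplicial_complex n \<Delta>'" and "SR_ideal n \<Delta>' = facet_ideal n (coskel n \<Sigma> 1)"
  shows "alexander_dual n \<Delta> = skel (alexander_dual n \<Delta>') (int n - int l - 2)"
proof -
  have "\<Delta>' = \<Sigma>"
    using flag_eq_complex_of_nonedges[OF assms(1,2,6,7)] .
  have "alexander_dual n \<Delta> = gen_complex ((-) {1..n} ` nonfaces_of_card n \<Sigma> (l + 1))"
    by (rule alexander_dual_eq_gen_complex)
      (auto simp: nonfaces_of_card_def nonface_iff_contains_coskel_facet[OF assms(4,5)])
  also have "\<dots> = skel (alexander_dual n \<Sigma>) (int n - int (l + 1) - 1)"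
    by (rule skel_alexander_dual[symmetric])
  finally show ?thesis using \<open>\<Delta>' = \<Sigma>\<close> by (simp add: algebra_simps)
qed

end
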